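(* Let $\sigma : S \to A$ and $\tau : T \to A^\perp$ be two backward sequential strategies, where $A$ is a forest (e.g. obtained from arenas). Then the pullback $S \circledast T$ of $\sigma$ and $\tau$ is backward sequential as well.
   Context: $e \rightarrow e'$ denotes immediate causal dependency ($e<e'$ with nothing strictly between). A strategy $\sigma:S\to A$ between event structures with polarities is a map of esps which is courteous (if $s_1 \rightarrow s_2$ with $\mathrm{pol}(s_1)=+$ or $\mathrm{pol}(s_2)=-$ then $\sigma s_1 \rightarrow \sigma s_2$) and receptive. An event structure $S$ is backward sequential if for every $s\in S$, $[s]=\{s'\mid s'\le s\}$ is a total order. The pullback $S\circledast T$ is the event structure of primes $[(s,t)]_x$ of the product stable family $\mathcal{C}(S)\times\mathcal{C}(T)$ restricted to pairs with $\sigma s=\tau t$; in it, $[(s,t)]_x \rightarrow [(s',t')]_x$ implies $s \rightarrow s'$ or $t \rightarrow t'$. *)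

theory Defs
  imports Main
begin

record 'e es =
  ev  :: "'e set"
  leq :: "'e \<Rightarrow> 'e \<Rightarrow> bool"
  con :: "'e set set"

text \<open>An event structure with polarities; True = positive (+), False = negative (-).\<close>
record 'e esp = "'e es" +
  pol :: "'e \<Rightarrow> bool"

definition event_structure :: "('e, 'z) es_scheme \<Rightarrow> bool" where
  "event_structure E \<longleftrightarrow>
     (\<forall>a b. leq E a b \<longrightarrow> a \<in> ev E \<and> b \<in> ev E)
   \<and> (\<forall>a\<in>ev E. leq E a a)
   \<and> (\<forall>a b. leq E a b \<and> leq E b a \<longrightarrow> a = b)
   \<and> (\<forall>a b c. leq E a b \<and> leq E b c \<longrightarrow> leq E a c)
   \<and> (\<forall>a\<in>ev E. finite {b. leq E b a})
   \<and> (\<forall>X\<in>con E. finite X \<and> X \<subseteq> ev E)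
   \<and> {} \<in> con E
   \<and> (\<forall>a\<in>ev E. {a} \<in> con E)
   \<and> (\<forall>X Y. X \<in> con E \<and> Y \<subseteq> X \<longrightarrow> Y \<in> con E)
   \<and> (\<forall>X a b. X \<in> con E \<and> b \<in> X \<and> leq E a b \<longrightarrow> insert a X \<in> con E)"

definition lt :: "('e, 'z) es_scheme \<Rightarrow> 'e \<Rightarrow> 'e \<Rightarrow> bool" where
  "lt E a b \<longleftrightarrow> leq E a b \<and> a \<noteq> b"

definition imm :: "('e, 'z) es_scheme \<Rightarrow> 'e \<Rightarrow> 'e \<Rightarrow> bool" where
  "imm E a b \<longleftrightarrow> lt E a b \<and> \<not> (\<exists>c. lt E a c \<and> lt E c b)"

definition conf :: "('e, 'z) es_scheme \<Rightarrow> 'e set set" where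
  "conf E = {x. finite x \<and> x \<subseteq> ev E \<and> x \<in> con E
                 \<and> (\<forall>a b. b \<in> x \<and> leq E a b \<longrightarrow> a \<in> x)}"

definition dual :: "'e esp \<Rightarrow> 'e esp" where
  "dual A = A\<lparr>pol := (\<lambda>a. \<not> pol A a)\<rparr>"

definition backward_sequential :: "('e, 'z) es_scheme \<Rightarrow> bool" where
  "backward_sequential E \<longleftrightarrow>
     (\<forall>s\<in>ev E. \<forall>s1 s2. leq E s1 s \<and> leq E s2 s \<longrightarrow> leq E s1 s2 \<or> leq E s2 s1)"

definition forest :: "('e, 'z) es_scheme \<Rightarrow> bool" where
  "forest E \<longleftrightarrow>
     (\<forall>a\<in>ev E. \<forall>a1 a2. leq E a1 a \<and> leq E a2 a \<longrightarrow> leq E a1 a2 \<or> leq E a2 a1)"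

definition esp_map :: "('s \<Rightarrow> 'a) \<Rightarrow> 's esp \<Rightarrow> 'a esp \<Rightarrow> bool" where
  "esp_map f S A \<longleftrightarrow>
     (\<forall>s\<in>ev S. f s \<in> ev A)
   \<and> (\<forall>x\<in>conf S. f ` x \<in> conf A \<and> inj_on f x)
   \<and> (\<forall>s\<in>ev S. pol A (f s) = pol S s)"

definition courteous :: "('s \<Rightarrow> 'a) \<Rightarrow> 's esp \<Rightarrow> 'a esp \<Rightarrow> bool" where
  "courteous f S A \<longleftrightarrow>
     (\<forall>s1 s2. imm S s1 s2 \<and> (pol S s1 \<or> \<not> pol S s2) \<longrightarrow> imm A (f s1) (f s2))"

definition receptive :: "('s \<Rightarrow> 'a) \<Rightarrow> 's esp \<Rightarrow> 'a esp \<Rightarrow> bool" where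
  "receptive f S A \<longleftrightarrow>
     (\<forall>x\<in>conf S. \<forall>a. a \<notin> f ` x \<and> insert a (f ` x) \<in> conf A \<and> \<not> pol A a \<longrightarrow>
        (\<exists>!s. s \<notin> x \<and> insert s x \<in> conf S \<and> f s = a))"

definition strategy :: "('s \<Rightarrow> 'a) \<Rightarrow> 's esp \<Rightarrow> 'a esp \<Rightarrow> bool" where
  "strategy f S A \<longleftrightarrow>
     event_structure S \<and> event_structure A \<and> esp_map f S A \<and> courteous f S A \<and> receptive f S A"

text \<open>Configurations of the product stable family \<open>C(S) \<times> C(T)\<close> (Winskel),
  restricted to pairs \<open>(s,t)\<close> with \<open>\<sigma> s = \<tau> t\<close>.\<close>
definition sync_conf ::
  "('s \<Rightarrow> 'a) \<Rightarrow> ('t \<Rightarrow> 'a) \<Rightarrow> 's esp \<Rightarrow> 't esp \<Rightarrow> ('s \<times> 't) set \<Rightarrow> bool" where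
  "sync_conf \<sigma> \<tau> S T z \<longleftrightarrow>
     finite z
   \<and> fst ` z \<in> conf S \<and> snd ` z \<in> conf T
   \<and> inj_on fst z \<and> inj_on snd z
   \<and> (\<forall>p\<in>z. \<sigma> (fst p) = \<tau> (snd p))
   \<and> (\<forall>e\<in>z. \<forall>e'\<in>z. e \<noteq> e' \<longrightarrow>
        (\<exists>y\<subseteq>z. fst ` y \<in> conf S \<and> snd ` y \<in> conf T \<and> (e \<in> y \<longleftrightarrow> e' \<notin> y)))"

definition prime_of ::
  "('s \<Rightarrow> 'a) \<Rightarrow> ('t \<Rightarrow> 'a) \<Rightarrow> 's esp \<Rightarrow> 't esp \<Rightarrow> ('s \<times> 't) set \<Rightarrow> ('s \<times> 't) \<Rightarrow> ('s \<times> 't) set" where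
  "prime_of \<sigma> \<tau> S T z e = \<Inter> {y. sync_conf \<sigma> \<tau> S T y \<and> e \<in> y \<and> y \<subseteq> z}"

definition pb_events ::
  "('s \<Rightarrow> 'a) \<Rightarrow> ('t \<Rightarrow> 'a) \<Rightarrow> 's esp \<Rightarrow> 't esp \<Rightarrow> ('s \<times> 't) set set" where
  "pb_events \<sigma> \<tau> S T = {prime_of \<sigma> \<tau> S T z e | z e. sync_conf \<sigma> \<tau> S T z \<and> e \<in> z}"

definition pullback ::
  "('s \<Rightarrow> 'a) \<Rightarrow> ('t \<Rightarrow> 'a) \<Rightarrow> 's esp \<Rightarrow> 't esp \<Rightarrow> ('s \<times> 't) set es" where
  "pullback \<sigma> \<tau> S T =
     \<lparr> ev = pb_events \<sigma> \<tau> S T,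
       leq = (\<lambda>p q. p \<in> pb_events \<sigma> \<tau> S T \<and> q \<in> pb_events \<sigma> \<tau> S T \<and> p \<subseteq> q),
       con = {X. finite X \<and> X \<subseteq> pb_events \<sigma> \<tau> S T
                 \<and> (\<exists>z. sync_conf \<sigma> \<tau> S T z \<and> \<Union>X \<subseteq> z)} \<rparr>"

end

theory Submission
  imports Defs
begin

text \<open>In a synchronised configuration \<open>z\<close> the prime \<open>[e]\<^sub>z\<close> is the down-closure of \<open>e\<close>
  under the relation ``below in \<open>S\<close> or below in \<open>T\<close>''. Say \<open>fst e\<close> is positive, so that
  \<open>snd e\<close> is negative in \<open>T\<close>. By courtesy of \<open>\<tau>\<close>, an immediate predecessor \<open>t'\<close> of \<open>snd e\<close>
  is sent to a predecessor of \<open>\<tau> (snd e) = \<sigma> (fst e)\<close> in \<open>A\<close>, which is the image of a strict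
  predecessor of \<open>fst e\<close> in \<open>S\<close> because \<open>\<sigma>\<close> maps configurations to configurations. So every
  predecessor of \<open>e\<close> lies below a strict \<open>S\<close>-predecessor, and since \<open>[fst e]\<close> is a chain all of
  them lie below the event \<open>e\<^sub>0\<close> of the maximal one: \<open>[e]\<^sub>z = [e\<^sub>0]\<^sub>z \<union> {e}\<close>. Induction on the
  size of primes shows that they are chains.\<close>

lemma es_leq_ev: "event_structure E \<Longrightarrow> leq E a b \<Longrightarrow> a \<in> ev E \<and> b \<in> ev E"
  unfolding event_structure_def by (elim conjE) blast

lemma es_refl: "event_structure E \<Longrightarrow> a \<in> ev E \<Longrightarrow> leq E a a"
  unfolding event_structure_def by (elim conjE) blast

lemma es_antisym: "event_structure E \<Longrightarrow> leq E a b \<Longrightarrow> leq E b a \<Longrightarrow> a = b"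
  unfolding event_structure_def by (elim conjE) blast

lemma es_trans: "event_structure E \<Longrightarrow> leq E a b \<Longrightarrow> leq E b c \<Longrightarrow> leq E a c"
  unfolding event_structure_def by (elim conjE) blast

lemma es_finite_below: "event_structure E \<Longrightarrow> a \<in> ev E \<Longrightarrow> finite {b. leq E b a}"
  unfolding event_structure_def by (elim conjE) blast

lemma es_con_subset: "event_structure E \<Longrightarrow> X \<in> con E \<Longrightarrow> Y \<subseteq> X \<Longrightarrow> Y \<in> con E"
  unfolding event_structure_def by (elim conjE) blast

lemma es_con_singleton: "event_structure E \<Longrightarrow> a \<in> ev E \<Longrightarrow> {a} \<in> con E"
  unfolding event_structure_def by (elim conjE) blast

lemma es_con_insert_below:
  assumes "event_structure E" "X \<in> con E" "b \<in> X" "leq E a b"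
  shows "insert a X \<in> con E"
proof -
  have "\<forall>X a b. X \<in> con E \<and> b \<in> X \<and> leq E a b \<longrightarrow> insert a X \<in> con E"
    using assms(1) unfolding event_structure_def by (elim conjE) assumption
  with assms(2-4) show ?thesis by blast
qed

lemma confI:
  "finite x \<Longrightarrow> x \<subseteq> ev E \<Longrightarrow> x \<in> con E \<Longrightarrow> (\<And>a b. b \<in> x \<Longrightarrow> leq E a b \<Longrightarrow> a \<in> x)
    \<Longrightarrow> x \<in> conf E"
  unfolding conf_def by blast

lemma confD:
  assumes "x \<in> conf E"
  shows conf_ev: "x \<subseteq> ev E" and conf_con: "x \<in> con E"
    and conf_down_closed: "\<And>a b. b \<in> x \<Longrightarrow> leq E a b \<Longrightarrow> a \<in> x"
  using assms unfolding conf_def by blast+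

lemma conf_Int:
  assumes "event_structure E" "x \<in> conf E" "y \<in> conf E"
  shows "x \<inter> y \<in> conf E"
  using assms es_con_subset[OF assms(1), of x "x \<inter> y"] unfolding conf_def by auto

lemma es_below_conf:
  assumes es: "event_structure E" and s: "s \<in> ev E"
  shows "{x. leq E x s} \<in> conf E"
proof -
  have below: "insert s Y \<in> con E" if "finite Y" "Y \<subseteq> {x. leq E x s}" for Y
    using that
  proof (induction Y rule: finite_induct)
    case empty
    then show ?case using es_con_singleton[OF es s] by simp
  next
    case (insert y Y)
    then have "insert y (insert s Y) \<in> con E"
      using es_con_insert_below[OF es] by blast
    then show ?case by (simp add: insert_commute)
  qed
  have "{x. leq E x s} = insert s {x. leq E x s}" using es_refl[OF es s] by auto
  also have "\<dots> \<in> con E" using es_finite_below[OF es s] by (rule below) simp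
  finally show ?thesis
    using es_finite_below[OF es s] es_leq_ev[OF es] es_trans[OF es] by (intro confI) blast+
qed

lemma lt_imp_imm_above:
  assumes es: "event_structure E" and "lt E b t"
  shows "\<exists>t'. leq E b t' \<and> imm E t' t"
proof -
  define M where "M = {c. leq E b c \<and> lt E c t}"
  define below where "below c = {x. leq E x c}" for c
  have t: "t \<in> ev E" using assms(2) es_leq_ev[OF es] unfolding lt_def by blast
  have "b \<in> M"
    using assms(2) es_refl[OF es] es_leq_ev[OF es] unfolding M_def lt_def by blast
  moreover have "card (below d) < Suc (card (below t))" if "d \<in> M" for d
    using that es_finite_below[OF es t] es_trans[OF es]
    by (intro le_imp_less_Suc card_mono) (auto simp: below_def M_def lt_def)
  ultimately obtain c where c: "c \<in> M" and c_max: "\<And>d. d \<in> M \<Longrightarrow> card (below d) \<le> card (below c)"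
    using ex_has_greatest_nat[of "\<lambda>c. c \<in> M" b "\<lambda>c. card (below c)" "Suc (card (below t))"] by auto
  have "\<not> (lt E c d \<and> lt E d t)" for d
  proof
    assume cd: "lt E c d \<and> lt E d t"
    then have "d \<in> M" using c es_trans[OF es] unfolding M_def lt_def by blast
    have d: "d \<in> ev E" using cd es_leq_ev[OF es] unfolding lt_def by blast
    have "below c \<subseteq> below d"
      using cd es_trans[OF es] unfolding below_def lt_def by blast
    moreover have "d \<in> below d - below c"
      using cd es_refl[OF es d] es_antisym[OF es] unfolding below_def lt_def by auto
    ultimately have "below c \<subset> below d" by blast
    then have "card (below c) < card (below d)"
      using es_finite_below[OF es d] psubset_card_mono unfolding below_def by blast
    with c_max[OF \<open>d \<in> M\<close>] show False by simp
  qed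
  then show ?thesis using c unfolding imm_def M_def by blast
qed

lemma finite_chain_has_max:
  assumes "finite L" "L \<noteq> {}" "\<forall>x\<in>L. \<forall>y\<in>L. leq E x y \<or> leq E y x"
    and trans: "\<And>a b c. leq E a b \<Longrightarrow> leq E b c \<Longrightarrow> leq E a c"
  shows "\<exists>m\<in>L. \<forall>x\<in>L. leq E x m"
  using assms(1-3)
proof (induction L rule: finite_ne_induct)
  case (insert x F)
  then obtain m where m: "m \<in> F" "\<forall>y\<in>F. leq E y m" by auto
  then consider "leq E x m" | "leq E m x" using insert.prems by auto
  then show ?case
  proof cases
    case 1
    then show ?thesis using m by auto
  next
    case 2
    then have "\<forall>y\<in>F. leq E y x" using m trans by blast
    moreover have "leq E x x" using insert.prems by auto
    ultimately show ?thesis by auto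
  qed
qed auto

lemma rtrancl_preds_singleton:
  assumes "\<And>b. (b, e) \<in> R \<Longrightarrow> b = e"
  shows "{b. (b, e) \<in> R\<^sup>*} = {e}"
proof -
  have "b = e" if "(b, e) \<in> R\<^sup>*" for b
    using that by (induction rule: converse_rtrancl_induct) (auto dest: assms)
  then show ?thesis by auto
qed

lemma rtrancl_preds_insert:
  assumes "(e0, e) \<in> R" and "\<And>b. (b, e) \<in> R \<Longrightarrow> b = e \<or> (b, e0) \<in> R\<^sup>*"
  shows "{b. (b, e) \<in> R\<^sup>*} = insert e {b. (b, e0) \<in> R\<^sup>*}"
proof (intro equalityI subsetI)
  fix b assume "b \<in> {b. (b, e) \<in> R\<^sup>*}"
  then have "(b, e) \<in> R\<^sup>*" by simp
  then show "b \<in> insert e {b. (b, e0) \<in> R\<^sup>*}"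
  proof (induction rule: converse_rtrancl_induct)
    case (step b c)
    then show ?case using assms(2) by (auto intro: converse_rtrancl_into_rtrancl)
  qed simp
next
  fix b assume "b \<in> insert e {b. (b, e0) \<in> R\<^sup>*}"
  then show "b \<in> {b. (b, e) \<in> R\<^sup>*}" using assms(1) by auto
qed

section \<open>Primes of synchronised configurations\<close>

text \<open>\<open>f\<close> and \<open>g\<close> stand for the projections \<open>fst\<close> and \<open>snd\<close>; keeping them abstract makes
  the situation symmetric in \<open>S\<close> and \<open>T\<close>.\<close>
definition joint_pred :: "('s, 'x) es_scheme \<Rightarrow> ('t, 'y) es_scheme \<Rightarrow> ('p \<Rightarrow> 's) \<Rightarrow> ('p \<Rightarrow> 't)
    \<Rightarrow> 'p set \<Rightarrow> 'p rel" where
  "joint_pred S T f g z =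
     {(b, a). b \<in> z \<and> a \<in> z \<and> (leq S (f b) (f a) \<or> leq T (g b) (g a))}"

definition joint_down :: "('s, 'x) es_scheme \<Rightarrow> ('t, 'y) es_scheme \<Rightarrow> ('p \<Rightarrow> 's) \<Rightarrow> ('p \<Rightarrow> 't)
    \<Rightarrow> 'p set \<Rightarrow> 'p \<Rightarrow> 'p set" where
  "joint_down S T f g z e = {b. (b, e) \<in> (joint_pred S T f g z)\<^sup>*}"

lemma joint_pred_swap: "joint_pred T S g f z = joint_pred S T f g z"
  unfolding joint_pred_def by blast

lemma joint_down_swap: "joint_down T S g f z = joint_down S T f g z"
  unfolding joint_down_def by (simp only: joint_pred_swap[of T S g f z])

lemma joint_down_self: "e \<in> joint_down S T f g z e"
  unfolding joint_down_def by simp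

lemma joint_down_subset: "e \<in> z \<Longrightarrow> joint_down S T f g z e \<subseteq> z"
  unfolding joint_down_def joint_pred_def by (auto elim: converse_rtranclE)

lemma joint_down_trans: "a \<in> joint_down S T f g z b \<Longrightarrow> joint_down S T f g z a \<subseteq> joint_down S T f g z b"
  unfolding joint_down_def by (auto intro: rtrancl_trans)

lemma joint_down_step:
  "(a, b) \<in> joint_pred S T f g z \<Longrightarrow> b \<in> joint_down S T f g z c \<Longrightarrow> a \<in> joint_down S T f g z c"
  unfolding joint_down_def by (auto intro: converse_rtrancl_into_rtrancl)

lemma joint_down_conf:
  assumes es: "event_structure S" and fin: "finite z" and z: "f ` z \<in> conf S" and e: "e \<in> z"
  shows "f ` joint_down S T f g z e \<in> conf S"
proof -
  let ?D = "joint_down S T f g z e"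
  have D: "?D \<subseteq> z" by (rule joint_down_subset[OF e])
  then have sub: "f ` ?D \<subseteq> f ` z" by (rule image_mono)
  show ?thesis
  proof (rule confI)
    show "finite (f ` ?D)" using finite_subset[OF D fin] by (rule finite_imageI)
    show "f ` ?D \<subseteq> ev S" using sub conf_ev[OF z] by (rule order_trans)
    show "f ` ?D \<in> con S" using es_con_subset[OF es conf_con[OF z] sub] .
  next
    fix a b assume "b \<in> f ` ?D" and ab: "leq S a b"
    then obtain d where d: "d \<in> ?D" "b = f d" by blast
    then have "d \<in> z" using D by blast
    then obtain c where c: "c \<in> z" "a = f c" using conf_down_closed[OF z _ ab] d(2) by blast
    then have "(c, d) \<in> joint_pred S T f g z"
      using \<open>d \<in> z\<close> ab d(2) unfolding joint_pred_def by blast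
    then show "a \<in> f ` ?D" using joint_down_step[OF _ d(1)] c(2) by blast
  qed
qed

lemma conf_image_down_closed:
  assumes "inj_on f z" "y \<subseteq> z" "f ` y \<in> conf S" "b \<in> z" "c \<in> y" "leq S (f b) (f c)"
  shows "b \<in> y"
proof -
  have "f b \<in> f ` y" using conf_down_closed[OF assms(3) _ assms(6)] assms(5) by blast
  then obtain w where "w \<in> y" "f w = f b" by (metis imageE)
  then show ?thesis using inj_onD[OF assms(1)] assms(2,4) by blast
qed

lemma joint_down_least:
  assumes "inj_on f z" "inj_on g z" "y \<subseteq> z" "f ` y \<in> conf S" "g ` y \<in> conf T" "e \<in> y"
  shows "joint_down S T f g z e \<subseteq> y"
proof
  fix b assume "b \<in> joint_down S T f g z e"
  then have "(b, e) \<in> (joint_pred S T f g z)\<^sup>*" unfolding joint_down_def by simp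
  then show "b \<in> y"
  proof (induction rule: converse_rtrancl_induct)
    case (step b c)
    then have "b \<in> z" and "leq S (f b) (f c) \<or> leq T (g b) (g c)"
      unfolding joint_pred_def by auto
    then show ?case
      using conf_image_down_closed[OF assms(1,3,4) _ step.IH] conf_image_down_closed[OF assms(2,3,5) _ step.IH]
      by blast
  qed (rule assms(6))
qed

lemma sync_confD:
  assumes "sync_conf \<sigma> \<tau> S T z"
  shows "finite z" "fst ` z \<in> conf S" "snd ` z \<in> conf T" "inj_on fst z" "inj_on snd z"
    "\<forall>p\<in>z. \<sigma> (fst p) = \<tau> (snd p)"
    "\<forall>e\<in>z. \<forall>e'\<in>z. e \<noteq> e' \<longrightarrow>
        (\<exists>y\<subseteq>z. fst ` y \<in> conf S \<and> snd ` y \<in> conf T \<and> (e \<in> y \<longleftrightarrow> e' \<notin> y))"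
  using assms unfolding sync_conf_def by simp_all

lemma sync_conf_subset:
  assumes esS: "event_structure S" and esT: "event_structure T"
    and z: "sync_conf \<sigma> \<tau> S T z" and wz: "w \<subseteq> z"
    and w1: "fst ` w \<in> conf S" and w2: "snd ` w \<in> conf T"
  shows "sync_conf \<sigma> \<tau> S T w"
proof -
  have "\<exists>y'\<subseteq>w. fst ` y' \<in> conf S \<and> snd ` y' \<in> conf T \<and> (e \<in> y' \<longleftrightarrow> e' \<notin> y')"
    if e: "e \<in> w" "e' \<in> w" "e \<noteq> e'" for e e'
  proof -
    have "e \<in> z" "e' \<in> z" using e(1,2) wz by blast+
    then obtain y where y: "y \<subseteq> z" "fst ` y \<in> conf S" "snd ` y \<in> conf T" "e \<in> y \<longleftrightarrow> e' \<notin> y"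
      using sync_confD(7)[OF z] e(3) by blast
    have "fst ` (y \<inter> w) \<in> conf S"
      using inj_on_image_Int[OF sync_confD(4)[OF z] y(1) wz] conf_Int[OF esS y(2) w1] by simp
    moreover have "snd ` (y \<inter> w) \<in> conf T"
      using inj_on_image_Int[OF sync_confD(5)[OF z] y(1) wz] conf_Int[OF esT y(3) w2] by simp
    ultimately show ?thesis using y(4) e by (intro exI[of _ "y \<inter> w"]) auto
  qed
  moreover have "finite w" using sync_confD(1)[OF z] wz by (rule finite_subset[rotated])
  moreover have "inj_on fst w" "inj_on snd w"
    using sync_confD(4,5)[OF z] wz by (auto intro: inj_on_subset)
  moreover have "\<forall>p\<in>w. \<sigma> (fst p) = \<tau> (snd p)" using sync_confD(6)[OF z] wz by blast
  ultimately show ?thesis using w1 w2 unfolding sync_conf_def by simp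
qed

lemma joint_down_sync_conf:
  assumes esS: "event_structure S" and esT: "event_structure T"
    and z: "sync_conf \<sigma> \<tau> S T z" and e: "e \<in> z"
  shows "sync_conf \<sigma> \<tau> S T (joint_down S T fst snd z e)"
proof (rule sync_conf_subset[OF esS esT z joint_down_subset[OF e]])
  show "fst ` joint_down S T fst snd z e \<in> conf S"
    by (rule joint_down_conf[OF esS sync_confD(1,2)[OF z] e])
  show "snd ` joint_down S T fst snd z e \<in> conf T"
    using joint_down_conf[OF esT sync_confD(1,3)[OF z] e, of S fst]
    by (simp only: joint_down_swap[where S = S and T = T and f = fst and g = snd])
qed

lemma joint_down_sync_conf_least:
  assumes z: "sync_conf \<sigma> \<tau> S T z" and y: "sync_conf \<sigma> \<tau> S T y" "y \<subseteq> z" "e \<in> y"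
  shows "joint_down S T fst snd z e \<subseteq> y"
  by (rule joint_down_least[OF sync_confD(4,5)[OF z] y(2) sync_confD(2,3)[OF y(1)] y(3)])

lemma prime_of_eq_joint_down:
  assumes "event_structure S" "event_structure T" and z: "sync_conf \<sigma> \<tau> S T z" and e: "e \<in> z"
  shows "prime_of \<sigma> \<tau> S T z e = joint_down S T fst snd z e"
  unfolding prime_of_def
proof (rule antisym)
  show "\<Inter> {y. sync_conf \<sigma> \<tau> S T y \<and> e \<in> y \<and> y \<subseteq> z} \<subseteq> joint_down S T fst snd z e"
    by (rule Inter_lower)
      (simp add: joint_down_sync_conf[OF assms] joint_down_self joint_down_subset[OF e])
  show "joint_down S T fst snd z e \<subseteq> \<Inter> {y. sync_conf \<sigma> \<tau> S T y \<and> e \<in> y \<and> y \<subseteq> z}"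
    by (rule Inter_greatest) (use joint_down_sync_conf_least[OF z] in blast)
qed

lemma joint_down_sync_conf_eq:
  assumes esS: "event_structure S" and esT: "event_structure T"
    and z: "sync_conf \<sigma> \<tau> S T z" and w: "sync_conf \<sigma> \<tau> S T w" and wz: "w \<subseteq> z" and e: "e \<in> w"
  shows "joint_down S T fst snd w e = joint_down S T fst snd z e"
proof
  have "joint_pred S T fst snd w \<subseteq> joint_pred S T fst snd z"
    using wz unfolding joint_pred_def by auto
  then show "joint_down S T fst snd w e \<subseteq> joint_down S T fst snd z e"
    unfolding joint_down_def using rtrancl_mono by blast
  have "joint_down S T fst snd w e \<subseteq> z" using joint_down_subset[OF e] wz by (rule order_trans)
  then show "joint_down S T fst snd z e \<subseteq> joint_down S T fst snd w e"
    using joint_down_sync_conf_least[OF z joint_down_sync_conf[OF esS esT w e] _ joint_down_self] by blast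
qed

lemma joint_down_antisym:
  assumes z: "sync_conf \<sigma> \<tau> S T z" and "a \<in> z" "b \<in> z"
    and ab: "a \<in> joint_down S T fst snd z b" and ba: "b \<in> joint_down S T fst snd z a"
  shows "a = b"
proof (rule ccontr)
  assume "a \<noteq> b"
  then obtain y where y: "y \<subseteq> z" "fst ` y \<in> conf S" "snd ` y \<in> conf T" "a \<in> y \<longleftrightarrow> b \<notin> y"
    using sync_confD(7)[OF z] assms(2,3) by blast
  have "joint_down S T fst snd z c \<subseteq> y" if "c \<in> y" for c
    by (rule joint_down_least[OF sync_confD(4,5)[OF z] y(1-3) that])
  then show False using y(4) ab ba by blast
qed

section \<open>The chain argument\<close>

text \<open>\<open>B\<close> is \<open>A\<close> up to polarities, so that the lemma applies to \<open>\<sigma> : S \<rightarrow> A\<close> and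
  \<open>\<tau> : T \<rightarrow> A\<^sup>\<bottom>\<close> with either of them in the role of \<open>\<tau>\<close>.\<close>
lemma joint_pred_lift_negative:
  fixes f :: "'p \<Rightarrow> 's" and g :: "'p \<Rightarrow> 't" and S :: "'s esp" and T :: "'t esp"
    and \<sigma> :: "'s \<Rightarrow> 'a" and \<tau> :: "'t \<Rightarrow> 'a" and A B :: "'a esp"
  assumes esS: "event_structure S" and esT: "event_structure T"
    and inj: "inj_on f z" and fz: "f ` z \<in> conf S" and gz: "g ` z \<in> conf T"
    and sync: "\<forall>p\<in>z. \<sigma> (f p) = \<tau> (g p)"
    and mS: "esp_map \<sigma> S A" and mT: "esp_map \<tau> T B" and cT: "courteous \<tau> T B"
    and lB: "leq B = leq A"
    and e: "e \<in> z" and neg: "\<not> pol T (g e)" and b: "b \<in> z" and lt: "lt T (g b) (g e)"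
  shows "\<exists>b'\<in>z. lt S (f b') (f e) \<and> (b, b') \<in> joint_pred S T f g z"
proof -
  obtain t' where bt': "leq T (g b) t'" and t': "imm T t' (g e)"
    using lt_imp_imm_above[OF esT lt] by blast
  have fe: "f e \<in> ev S" using conf_ev[OF fz] e by blast
  have "imm B (\<tau> t') (\<tau> (g e))" using cT t' neg unfolding courteous_def by blast
  then have le: "leq A (\<tau> t') (\<sigma> (f e))" using lB sync e unfolding imm_def lt_def by auto
  have "\<sigma> ` {x. leq S x (f e)} \<in> conf A"
    using mS es_below_conf[OF esS fe] unfolding esp_map_def by blast
  moreover have "\<sigma> (f e) \<in> \<sigma> ` {x. leq S x (f e)}" using es_refl[OF esS fe] by blast
  ultimately have "\<tau> t' \<in> \<sigma> ` {x. leq S x (f e)}" using le by (rule conf_down_closed)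
  then obtain s where s: "leq S s (f e)" "\<sigma> s = \<tau> t'" by auto
  obtain b' where b': "b' \<in> z" "f b' = s"
    using conf_down_closed[OF fz _ s(1)] e by (metis imageE imageI)
  have "leq T t' (g e)" using t' unfolding imm_def lt_def by simp
  then have t'z: "t' \<in> g ` z" using conf_down_closed[OF gz] e by blast
  have "inj_on \<tau> (g ` z)" using mT gz unfolding esp_map_def by blast
  moreover have "\<tau> (g b') = \<tau> t'" using sync b' s(2) by metis
  ultimately have gb': "g b' = t'" using t'z b'(1) by (meson imageI inj_onD)
  have "b' \<noteq> e" using gb' t' unfolding imm_def lt_def by auto
  then have "f b' \<noteq> f e" using inj b'(1) e by (meson inj_onD)
  then have "lt S (f b') (f e)" using s(1) b'(2) unfolding lt_def by simp
  moreover have "(b, b') \<in> joint_pred S T f g z" using b b'(1) bt' gb' unfolding joint_pred_def by simp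
  ultimately show ?thesis using b'(1) by blast
qed

lemma joint_down_cases:
  fixes f :: "'p \<Rightarrow> 's" and g :: "'p \<Rightarrow> 't" and S :: "'s esp" and T :: "'t esp"
    and \<sigma> :: "'s \<Rightarrow> 'a" and \<tau> :: "'t \<Rightarrow> 'a" and A B :: "'a esp"
  assumes esS: "event_structure S" and esT: "event_structure T"
    and injf: "inj_on f z" and injg: "inj_on g z" and fz: "f ` z \<in> conf S" and gz: "g ` z \<in> conf T"
    and sync: "\<forall>p\<in>z. \<sigma> (f p) = \<tau> (g p)"
    and mS: "esp_map \<sigma> S A" and mT: "esp_map \<tau> T B" and cT: "courteous \<tau> T B"
    and lB: "leq B = leq A" and bS: "backward_sequential S"
    and e: "e \<in> z" and neg: "\<not> pol T (g e)"
  shows "joint_down S T f g z e = {e} \<or>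
    (\<exists>e0\<in>z. e0 \<noteq> e \<and> joint_down S T f g z e = insert e (joint_down S T f g z e0))"
proof -
  let ?R = "joint_pred S T f g z"
  have below: "b = e \<or> (\<exists>b'\<in>z. lt S (f b') (f e) \<and> (b, b') \<in> ?R\<^sup>*)" if "(b, e) \<in> ?R" for b
  proof -
    from that have b: "b \<in> z" and "leq S (f b) (f e) \<or> leq T (g b) (g e)"
      unfolding joint_pred_def by auto
    then consider "b = e" | "lt S (f b) (f e)" | "lt T (g b) (g e)"
      using inj_onD[OF injf _ b e] inj_onD[OF injg _ b e] unfolding lt_def by blast
    then show ?thesis
    proof cases
      case 2
      then show ?thesis using b by blast
    next
      case 3
      then show ?thesis
        using joint_pred_lift_negative[OF esS esT injf fz gz sync mS mT cT lB e neg b] by blast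
    qed simp
  qed
  define L where "L = {x. lt S x (f e)}"
  show ?thesis
  proof (cases "L = {}")
    case True
    then have "joint_down S T f g z e = {e}"
      unfolding joint_down_def using below by (intro rtrancl_preds_singleton) (auto simp: L_def)
    then show ?thesis ..
  next
    case False
    have fe: "f e \<in> ev S" using conf_ev[OF fz] e by blast
    have "finite L"
      using es_finite_below[OF esS fe] by (rule finite_subset[rotated]) (auto simp: L_def lt_def)
    moreover have "\<forall>x\<in>L. \<forall>y\<in>L. leq S x y \<or> leq S y x"
      using bS fe unfolding L_def lt_def backward_sequential_def by blast
    ultimately have "\<exists>m\<in>L. \<forall>x\<in>L. leq S x m"
      using False by (intro finite_chain_has_max) (auto intro: es_trans[OF esS])
    then obtain s0 where s0: "s0 \<in> L" "\<forall>x\<in>L. leq S x s0" by blast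
    have "s0 \<in> f ` z" using conf_down_closed[OF fz] s0(1) e unfolding L_def lt_def by blast
    then obtain e0 where e0: "e0 \<in> z" "f e0 = s0" by (metis imageE)
    have "e0 \<noteq> e" using e0 s0(1) unfolding L_def lt_def by auto
    have "(e0, e) \<in> ?R" using e0 e s0(1) unfolding joint_pred_def L_def lt_def by auto
    moreover have "b = e \<or> (b, e0) \<in> ?R\<^sup>*" if "(b, e) \<in> ?R" for b
      using below[OF that]
    proof
      assume "\<exists>b'\<in>z. lt S (f b') (f e) \<and> (b, b') \<in> ?R\<^sup>*"
      then obtain b' where b': "b' \<in> z" "f b' \<in> L" "(b, b') \<in> ?R\<^sup>*" unfolding L_def by blast
      then have "(b', e0) \<in> ?R" using s0(2) e0 unfolding joint_pred_def by auto
      with b'(3) show ?thesis by (simp add: rtrancl_into_rtrancl)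
    qed simp
    ultimately have "joint_down S T f g z e = insert e (joint_down S T f g z e0)"
      unfolding joint_down_def by (rule rtrancl_preds_insert)
    then show ?thesis using e0(1) \<open>e0 \<noteq> e\<close> by blast
  qed
qed

lemma strategy_event_structure: "strategy f S A \<Longrightarrow> event_structure S"
  unfolding strategy_def by (elim conjE)

lemma strategy_esp_map: "strategy f S A \<Longrightarrow> esp_map f S A"
  unfolding strategy_def by (elim conjE)

lemma strategy_courteous: "strategy f S A \<Longrightarrow> courteous f S A"
  unfolding strategy_def by (elim conjE)

lemma sync_conf_pol:
  assumes "esp_map \<sigma> S A" "esp_map \<tau> T (dual A)" "sync_conf \<sigma> \<tau> S T z" "e \<in> z"
  shows "pol T (snd e) \<longleftrightarrow> \<not> pol S (fst e)"
proof -
  have "fst e \<in> ev S" "snd e \<in> ev T"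
    using conf_ev[OF sync_confD(2)[OF assms(3)]] conf_ev[OF sync_confD(3)[OF assms(3)]] assms(4) by blast+
  then have "pol A (\<sigma> (fst e)) = pol S (fst e)" "pol (dual A) (\<tau> (snd e)) = pol T (snd e)"
    using assms(1,2) unfolding esp_map_def by blast+
  moreover have "\<sigma> (fst e) = \<tau> (snd e)" using sync_confD(6)[OF assms(3)] assms(4) by blast
  ultimately show ?thesis by (simp add: dual_def)
qed

lemma sync_joint_down_cases:
  fixes \<sigma> :: "'s \<Rightarrow> 'a" and \<tau> :: "'t \<Rightarrow> 'a" and S :: "'s esp" and T :: "'t esp" and A :: "'a esp"
  assumes sS: "strategy \<sigma> S A" and sT: "strategy \<tau> T (dual A)"
    and bS: "backward_sequential S" and bT: "backward_sequential T"
    and z: "sync_conf \<sigma> \<tau> S T z" and e: "e \<in> z"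
  shows "joint_down S T fst snd z e = {e} \<or>
    (\<exists>e0\<in>z. e0 \<noteq> e \<and> joint_down S T fst snd z e = insert e (joint_down S T fst snd z e0))"
proof -
  note esS = strategy_event_structure[OF sS] and esT = strategy_event_structure[OF sT]
  note mS = strategy_esp_map[OF sS] and mT = strategy_esp_map[OF sT]
  have "leq (dual A) = leq A" by (simp add: dual_def)
  show ?thesis
  proof (cases "pol S (fst e)")
    case True
    then have "\<not> pol T (snd e)" using sync_conf_pol[OF mS mT z e] by simp
    then show ?thesis
      using joint_down_cases[OF esS esT sync_confD(4,5,2,3,6)[OF z] mS mT strategy_courteous[OF sT]
          \<open>leq (dual A) = leq A\<close> bS e] by blast
  next
    case False
    have "\<forall>p\<in>z. \<tau> (snd p) = \<sigma> (fst p)" using sync_confD(6)[OF z] by simp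
    from joint_down_cases[OF esT esS sync_confD(5,4,3,2)[OF z] this mT mS strategy_courteous[OF sS]
        \<open>leq (dual A) = leq A\<close>[symmetric] bT e False]
    show ?thesis by (simp only: joint_down_swap[where S = S and T = T and f = fst and g = snd])
  qed
qed

lemma sync_joint_down_chain:
  fixes \<sigma> :: "'s \<Rightarrow> 'a" and \<tau> :: "'t \<Rightarrow> 'a" and S :: "'s esp" and T :: "'t esp" and A :: "'a esp"
  assumes sS: "strategy \<sigma> S A" and sT: "strategy \<tau> T (dual A)"
    and bS: "backward_sequential S" and bT: "backward_sequential T"
    and z: "sync_conf \<sigma> \<tau> S T z"
  shows "e \<in> z \<Longrightarrow> e1 \<in> joint_down S T fst snd z e \<Longrightarrow> e2 \<in> joint_down S T fst snd z e
    \<Longrightarrow> e1 \<in> joint_down S T fst snd z e2 \<or> e2 \<in> joint_down S T fst snd z e1"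
proof (induction "card (joint_down S T fst snd z e)" arbitrary: e rule: less_induct)
  case less
  let ?D = "joint_down S T fst snd z"
  from sync_joint_down_cases[OF assms less.prems(1)] show ?case
  proof
    assume "?D e = {e}"
    then show ?thesis using less.prems joint_down_self by auto
  next
    assume "\<exists>e0\<in>z. e0 \<noteq> e \<and> ?D e = insert e (?D e0)"
    then obtain e0 where e0: "e0 \<in> z" "e0 \<noteq> e" and De: "?D e = insert e (?D e0)" by blast
    have "e0 \<in> ?D e" using De joint_down_self[of e0] by blast
    then have "e \<notin> ?D e0"
      using joint_down_antisym[OF z less.prems(1) e0(1)] e0(2) by blast
    moreover have "finite (?D e0)"
      using joint_down_subset[OF e0(1)] sync_confD(1)[OF z] by (rule finite_subset)
    ultimately have "card (?D e0) < card (?D e)" using De by simp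
    note IH = less.hyps[OF this e0(1)]
    show ?thesis
      using less.prems(2,3) IH De joint_down_self by auto
  qed
qed

lemma pb_event_below_prime:
  assumes esS: "event_structure S" and esT: "event_structure T"
    and z: "sync_conf \<sigma> \<tau> S T z" and e: "e \<in> z"
    and q: "q \<in> pb_events \<sigma> \<tau> S T" and qe: "q \<subseteq> prime_of \<sigma> \<tau> S T z e"
  shows "\<exists>e1\<in>joint_down S T fst snd z e. q = joint_down S T fst snd z e1"
proof -
  obtain z1 e1 where z1: "sync_conf \<sigma> \<tau> S T z1" and e1: "e1 \<in> z1" and q1: "q = prime_of \<sigma> \<tau> S T z1 e1"
    using q unfolding pb_events_def by blast
  have q_eq: "q = joint_down S T fst snd z1 e1"
    using prime_of_eq_joint_down[OF esS esT z1 e1] q1 by simp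
  have qe': "q \<subseteq> joint_down S T fst snd z e"
    using qe prime_of_eq_joint_down[OF esS esT z e] by simp
  have sq: "sync_conf \<sigma> \<tau> S T q" using joint_down_sync_conf[OF esS esT z1 e1] q_eq by simp
  have e1q: "e1 \<in> q" using joint_down_self q_eq by metis
  have "q \<subseteq> z" using qe' joint_down_subset[OF e] by (rule order_trans)
  have "q \<subseteq> z1" unfolding q_eq by (rule joint_down_subset[OF e1])
  have "q = joint_down S T fst snd q e1"
    using joint_down_sync_conf_eq[OF esS esT z1 sq \<open>q \<subseteq> z1\<close> e1q] q_eq by simp
  also have "\<dots> = joint_down S T fst snd z e1"
    by (rule joint_down_sync_conf_eq[OF esS esT z sq \<open>q \<subseteq> z\<close> e1q])
  finally show ?thesis using e1q qe' by blast
qed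

theorem mainTheorem12:
  fixes \<sigma> :: "'s \<Rightarrow> 'a" and \<tau> :: "'t \<Rightarrow> 'a"
    and S :: "'s esp" and T :: "'t esp" and A :: "'a esp"
  assumes "event_structure A"
    and "forest A"
    and "strategy \<sigma> S A"
    and "strategy \<tau> T (dual A)"
    and "backward_sequential S"
    and "backward_sequential T"
  shows "backward_sequential (pullback \<sigma> \<tau> S T)"
  unfolding backward_sequential_def
proof (intro ballI allI impI)
  note esS = strategy_event_structure[OF assms(3)] and esT = strategy_event_structure[OF assms(4)]
  fix p q1 q2
  assume "p \<in> ev (pullback \<sigma> \<tau> S T)"
    and "leq (pullback \<sigma> \<tau> S T) q1 p \<and> leq (pullback \<sigma> \<tau> S T) q2 p"
  then have q: "q1 \<in> pb_events \<sigma> \<tau> S T" "q1 \<subseteq> p" "q2 \<in> pb_events \<sigma> \<tau> S T" "q2 \<subseteq> p"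
    and "p \<in> pb_events \<sigma> \<tau> S T"
    by (simp_all add: pullback_def)
  then obtain z e where z: "sync_conf \<sigma> \<tau> S T z" "e \<in> z" and p: "p = prime_of \<sigma> \<tau> S T z e"
    unfolding pb_events_def by blast
  obtain e1 e2 where
    "e1 \<in> joint_down S T fst snd z e" "q1 = joint_down S T fst snd z e1"
    "e2 \<in> joint_down S T fst snd z e" "q2 = joint_down S T fst snd z e2"
    using pb_event_below_prime[OF esS esT z] q p by metis
  with sync_joint_down_chain[OF assms(3-6) z(1) z(2)] have "q1 \<subseteq> q2 \<or> q2 \<subseteq> q1"
    using joint_down_trans by metis
  then show "leq (pullback \<sigma> \<tau> S T) q1 q2 \<or> leq (pullback \<sigma> \<tau> S T) q2 q1"
    using q(1,3) by (simp add: pullback_def)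
qed

end
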